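(* Let $p_0\in P_N$, $m\ge1$, $\beta\ge0$, and let $\Lambda_m$ be the set of irreducible $\nu\in\Sigma_{P_N}$ with $p_0\in\mathrm{supp}\,\nu$ and $|\mathrm{supp}\,\nu|=2m$. Then $\sum_{\nu\in\Lambda_m}\varphi_\beta(\nu)\le5^{m-1}\alpha_0(\beta)^m$.
   Context: $G=\mathbb Z_n$, $\rho$ faithful unitary one-dimensional. On $\mathbb Z^4$: $P_N$ is the set of oriented plaquettes (each with its opposite $-p$) with vertices in $B_N=[-N,N]^4\cap\mathbb Z^4$. A 2-form is $\nu:P_N\to G$ with $\nu_{-p}=-\nu_p$; $\Sigma_{P_N}$ is the set of closed 2-forms, i.e. $\sum_{p\in\partial c}\nu_p=0$ for every oriented 3-cell $c$ in $B_N$ (with $\partial c$ its six oriented boundary plaquettes); equivalently $\nu=d\sigma$ for some $G$-valued 1-form $\sigma$. $\varphi_r(g)=e^{r(\mathrm{Re}\rho(g)-1)}$, $\varphi_\beta(\nu)=\prod_{p\in P_N}\varphi_\beta(\nu_p)$, $\alpha_0(r)=\sum_{g\ne0}\varphi_r(g)^2$. $\nu$ is irreducible if there is no non-trivial $\nu'\in\Sigma_{P_N}$, $\nu'\neq\nu$, with $\nu'=\nu|_{\mathrm{supp}\,\nu'}$. *)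

theory Defs
  imports "HOL-Analysis.Analysis"
begin

type_synonym vert = "int ^ 4"

text \<open>An oriented plaquette is (x, i, j) with i \<noteq> j: the unit square with corners
  x, x+e_i, x+e_j, x+e_i+e_j, oriented from direction i to direction j.\<close>
type_synonym plaq = "vert \<times> 4 \<times> 4"

definition unitv :: "4 \<Rightarrow> vert" where
  "unitv i = (\<chi> k. if k = i then 1 else 0)"

definition box :: "nat \<Rightarrow> vert set" where
  "box N = {x. \<forall>k. - int N \<le> x $ k \<and> x $ k \<le> int N}"

definition plaquettes :: "nat \<Rightarrow> plaq set" where
  "plaquettes N = {(x, i, j). i \<noteq> j \<and>
      (\<forall>S \<subseteq> {i, j}. x + (\<Sum>l\<in>S. unitv l) \<in> box N)}"

definition opp :: "plaq \<Rightarrow> plaq" where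
  "opp p = (case p of (x, i, j) \<Rightarrow> (x, j, i))"

text \<open>G = Z_n, elements represented by {0..<n}. A G-valued 2-form on P_N:
  values in G on P_N, 0 (irrelevant) outside, and \<nu>(-p) = -\<nu>(p).\<close>
definition two_form :: "nat \<Rightarrow> nat \<Rightarrow> (plaq \<Rightarrow> int) \<Rightarrow> bool" where
  "two_form n N \<nu> \<longleftrightarrow>
     (\<forall>p \<in> plaquettes N. \<nu> p \<in> {0..<int n} \<and> \<nu> (opp p) = (- \<nu> p) mod int n) \<and>
     (\<forall>p. p \<notin> plaquettes N \<longrightarrow> \<nu> p = 0)"

text \<open>Oriented 3-cells (x,i,j,k), distinct directions, all 8 corners in B_N.
  The six oriented boundary plaquettes are
  [x+e_i;j,k], -[x;j,k], -[x+e_j;i,k], [x;i,k], [x+e_k;i,j], -[x;i,j].\<close>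
definition cube_in_box :: "nat \<Rightarrow> vert \<Rightarrow> 4 \<Rightarrow> 4 \<Rightarrow> 4 \<Rightarrow> bool" where
  "cube_in_box N x i j k \<longleftrightarrow> i \<noteq> j \<and> i \<noteq> k \<and> j \<noteq> k \<and>
      (\<forall>S \<subseteq> {i, j, k}. x + (\<Sum>l\<in>S. unitv l) \<in> box N)"

definition cube_boundary :: "vert \<Rightarrow> 4 \<Rightarrow> 4 \<Rightarrow> 4 \<Rightarrow> plaq list" where
  "cube_boundary x i j k =
     [(x + unitv i, j, k), (x, k, j), (x + unitv j, k, i), (x, i, k),
      (x + unitv k, i, j), (x, j, i)]"

definition closed_forms :: "nat \<Rightarrow> nat \<Rightarrow> (plaq \<Rightarrow> int) set" where
  "closed_forms n N = {\<nu>. two_form n N \<nu> \<and>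
      (\<forall>x i j k. cube_in_box N x i j k \<longrightarrow>
          (\<Sum>p\<leftarrow>cube_boundary x i j k. \<nu> p) mod int n = 0)}"

definition supp :: "(plaq \<Rightarrow> int) \<Rightarrow> plaq set" where
  "supp \<nu> = {p. \<nu> p \<noteq> 0}"

definition irreducible_form :: "nat \<Rightarrow> nat \<Rightarrow> (plaq \<Rightarrow> int) \<Rightarrow> bool" where
  "irreducible_form n N \<nu> \<longleftrightarrow>
     \<not> (\<exists>\<nu>' \<in> closed_forms n N. \<nu>' \<noteq> (\<lambda>_. 0) \<and> \<nu>' \<noteq> \<nu> \<and>
            (\<forall>p \<in> supp \<nu>'. \<nu>' p = \<nu> p))"

text \<open>Faithful unitary one-dimensional representation of Z_n, given as a
  homomorphism Z \<rightarrow> C whose kernel is exactly nZ.\<close>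
definition faithful_rep :: "nat \<Rightarrow> (int \<Rightarrow> complex) \<Rightarrow> bool" where
  "faithful_rep n \<rho> \<longleftrightarrow> (\<forall>a b. \<rho> (a + b) = \<rho> a * \<rho> b) \<and> (\<forall>a. cmod (\<rho> a) = 1) \<and>
     (\<forall>a. \<rho> a = 1 \<longleftrightarrow> int n dvd a)"

definition phi :: "(int \<Rightarrow> complex) \<Rightarrow> real \<Rightarrow> int \<Rightarrow> real" where
  "phi \<rho> r g = exp (r * (Re (\<rho> g) - 1))"

definition phi_form :: "(int \<Rightarrow> complex) \<Rightarrow> nat \<Rightarrow> real \<Rightarrow> (plaq \<Rightarrow> int) \<Rightarrow> real" where
  "phi_form \<rho> N \<beta> \<nu> = (\<Prod>p \<in> plaquettes N. phi \<rho> \<beta> (\<nu> p))"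

definition alpha0 :: "nat \<Rightarrow> (int \<Rightarrow> complex) \<Rightarrow> real \<Rightarrow> real" where
  "alpha0 n \<rho> r = (\<Sum>g \<in> {1..<int n}. (phi \<rho> r g)^2)"

definition Lambda :: "nat \<Rightarrow> nat \<Rightarrow> plaq \<Rightarrow> nat \<Rightarrow> (plaq \<Rightarrow> int) set" where
  "Lambda n N p0 m = {\<nu> \<in> closed_forms n N. irreducible_form n N \<nu> \<and>
      p0 \<in> supp \<nu> \<and> card (supp \<nu>) = 2 * m}"

end

theory Submission
  imports Defs
begin

text \<open>Grow an irreducible closed form \<nu> from the empty form, two plaquettes at a time.
  Given a partial form f on which \<nu> agrees, if f is not yet closed, some 3-cell violates
  closedness for f while its boundary sum vanishes for \<nu>; as f is nonzero on one of its six
  plaquettes, \<nu> must be nonzero on one of the at most five others where f vanishes. Adding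
  that plaquette q together with its opposite costs a factor \<phi>(\<nu> q)^2, and summing over
  q and \<nu> q \<noteq> 0 gives a factor at most 5 \<alpha>0. If f is closed, irreducibility of \<nu> forces
  \<nu> = f. The very first plaquette is p0 itself, which accounts for the exponent m - 1.\<close>

lemma finite_box: "finite (box N)"
proof -
  have "box N \<subseteq> vec_lambda ` (PiE UNIV (\<lambda>_. {- int N..int N}))"
  proof
    fix x assume "x \<in> box N"
    hence "(\<lambda>k. x $ k) \<in> PiE UNIV (\<lambda>_. {- int N..int N})" by (auto simp: box_def)
    moreover have "x = vec_lambda (\<lambda>k. x $ k)" by simp
    ultimately show "x \<in> vec_lambda ` (PiE UNIV (\<lambda>_. {- int N..int N}))" by blast
  qed
  moreover have "finite (PiE (UNIV::4 set) (\<lambda>_. {- int N..int N}))" by (rule finite_PiE) auto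
  ultimately show ?thesis using finite_surj by blast
qed

lemma plaquettes_subset_box: "plaquettes N \<subseteq> box N \<times> UNIV \<times> UNIV"
proof
  fix p assume "p \<in> plaquettes N"
  then obtain x i j where p: "p = (x, i, j)" and "\<forall>S \<subseteq> {i, j}. x + (\<Sum>l\<in>S. unitv l) \<in> box N"
    unfolding plaquettes_def by blast
  hence "x + (\<Sum>l\<in>{}. unitv l) \<in> box N" by blast
  thus "p \<in> box N \<times> UNIV \<times> UNIV" using p by simp
qed

lemma finite_plaquettes: "finite (plaquettes N)"
  using finite_subset[OF plaquettes_subset_box] finite_box by auto

lemma mem_plaquettes:
  "(x, i, j) \<in> plaquettes N \<longleftrightarrow> i \<noteq> j \<and> (\<forall>S\<subseteq>{i, j}. x + (\<Sum>l\<in>S. unitv l) \<in> box N)"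
  unfolding plaquettes_def by (simp only: mem_Collect_eq prod.case)

lemma opp_opp [simp]: "opp (opp q) = q"
  by (cases q) (simp add: opp_def)

lemma opp_in_plaquettes: "q \<in> plaquettes N \<Longrightarrow> opp q \<in> plaquettes N"
  by (cases q) (auto simp: opp_def mem_plaquettes insert_commute)

lemma opp_neq_self: "q \<in> plaquettes N \<Longrightarrow> opp q \<noteq> q"
  by (cases q) (auto simp: opp_def mem_plaquettes)

lemma supp_subset_plaquettes: "two_form n N \<nu> \<Longrightarrow> supp \<nu> \<subseteq> plaquettes N"
  unfolding two_form_def supp_def by blast

lemma finite_supp: "two_form n N \<nu> \<Longrightarrow> finite (supp \<nu>)"
  by (rule finite_subset[OF supp_subset_plaquettes finite_plaquettes])

lemma two_form_opp_eq_0: "two_form n N f \<Longrightarrow> q \<in> plaquettes N \<Longrightarrow> f q = 0 \<Longrightarrow> f (opp q) = 0"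
  unfolding two_form_def by auto

lemma two_form_zero: "n \<ge> 1 \<Longrightarrow> two_form n N (\<lambda>_. 0)"
  unfolding two_form_def by auto

lemma finite_closed_forms: "finite (closed_forms n N)"
proof -
  let ?F = "{f. \<forall>p. (p \<in> plaquettes N \<longrightarrow> f p \<in> {0..<int n}) \<and> (p \<notin> plaquettes N \<longrightarrow> f p = 0)}"
  have "closed_forms n N \<subseteq> ?F"
    unfolding closed_forms_def two_form_def by auto
  moreover have "finite ?F"
    by (rule finite_set_of_finite_funs) (simp_all add: finite_plaquettes)
  ultimately show ?thesis by (rule finite_subset)
qed

lemma closed_form_two_form: "\<nu> \<in> closed_forms n N \<Longrightarrow> two_form n N \<nu>"
  unfolding closed_forms_def by blast

lemma closed_form_boundary_sum:
  "\<nu> \<in> closed_forms n N \<Longrightarrow> cube_in_box N x i j l \<Longrightarrow>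
    (\<Sum>p\<leftarrow>cube_boundary x i j l. \<nu> p) mod int n = 0"
  unfolding closed_forms_def by blast

lemma not_closed_form_violated_cube:
  assumes "two_form n N f" "f \<notin> closed_forms n N"
  obtains x i j l where "cube_in_box N x i j l"
    "(\<Sum>p\<leftarrow>cube_boundary x i j l. f p) mod int n \<noteq> 0"
  using assms unfolding closed_forms_def by blast

lemma neg_mod_neq_0:
  assumes "g \<in> {1..<int n}" shows "(- g) mod int n \<noteq> 0"
proof -
  have "\<not> int n dvd g" using assms zdvd_imp_le by fastforce
  thus ?thesis by (simp add: dvd_eq_mod_eq_0[symmetric])
qed

lemma neg_neg_mod: "g \<in> {1..<int n} \<Longrightarrow> (- ((- g) mod int n)) mod int n = g"
  by (simp add: mod_minus_eq)

lemma alpha0_nonneg: "alpha0 n \<rho> \<beta> \<ge> 0"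
  unfolding alpha0_def by (rule sum_nonneg) simp

lemma phi_0:
  assumes "faithful_rep n \<rho>" shows "phi \<rho> \<beta> 0 = 1"
proof -
  have "\<rho> 0 = 1" using assms unfolding faithful_rep_def by simp
  thus ?thesis by (simp add: phi_def)
qed

lemma phi_neg_mod:
  assumes "faithful_rep n \<rho>"
  shows "phi \<rho> \<beta> ((- g) mod int n) = phi \<rho> \<beta> g"
proof -
  have hom: "\<And>a b. \<rho> (a + b) = \<rho> a * \<rho> b" and norm: "\<And>a. cmod (\<rho> a) = 1"
    and ker: "\<And>a. \<rho> a = 1 \<longleftrightarrow> int n dvd a" using assms unfolding faithful_rep_def by auto
  have "\<rho> (- g) = \<rho> ((- g) div int n * int n + (- g) mod int n)" by simp
  also have "\<dots> = \<rho> ((- g) div int n * int n) * \<rho> ((- g) mod int n)" by (rule hom)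
  also have "\<rho> ((- g) div int n * int n) = 1" using ker by simp
  finally have mod_eq: "\<rho> ((- g) mod int n) = \<rho> (- g)" by simp
  have "\<rho> (- g) * \<rho> g = 1" using hom[of "-g" g] ker[of 0] by simp
  moreover have "cnj (\<rho> g) * \<rho> g = 1"
    using complex_norm_square[of "\<rho> g"] norm[of g] by (simp add: mult.commute)
  moreover have "\<rho> g \<noteq> 0" using norm[of g] by auto
  ultimately have "\<rho> (- g) = cnj (\<rho> g)" by (metis mult_cancel_right)
  thus ?thesis unfolding phi_def using mod_eq by simp
qed

subsection \<open>Extending a partial form\<close>

definition extend :: "nat \<Rightarrow> (plaq \<Rightarrow> int) \<Rightarrow> plaq \<Rightarrow> int \<Rightarrow> (plaq \<Rightarrow> int)" where
  "extend n f q g = f(q := g, opp q := (- g) mod int n)"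

definition irreducible_extensions :: "nat \<Rightarrow> nat \<Rightarrow> (plaq \<Rightarrow> int) \<Rightarrow> nat \<Rightarrow> (plaq \<Rightarrow> int) set" where
  "irreducible_extensions n N f k = {\<nu> \<in> closed_forms n N. irreducible_form n N \<nu> \<and>
      (\<forall>p\<in>supp f. \<nu> p = f p) \<and> card (supp \<nu>) = card (supp f) + 2 * k}"

definition ext_weight :: "(int \<Rightarrow> complex) \<Rightarrow> real \<Rightarrow> (plaq \<Rightarrow> int) \<Rightarrow> (plaq \<Rightarrow> int) \<Rightarrow> real" where
  "ext_weight \<rho> \<beta> f \<nu> = (\<Prod>p \<in> supp \<nu> - supp f. phi \<rho> \<beta> (\<nu> p))"

lemma ext_weight_nonneg: "ext_weight \<rho> \<beta> f \<nu> \<ge> 0"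
  unfolding ext_weight_def by (rule prod_nonneg) (simp add: phi_def)

lemma finite_irreducible_extensions: "finite (irreducible_extensions n N f k)"
  by (rule finite_subset[OF _ finite_closed_forms[of n N]]) (auto simp: irreducible_extensions_def)

lemma supp_extend:
  assumes "two_form n N f" "q \<in> plaquettes N" "f q = 0" "g \<in> {1..<int n}"
  shows "supp (extend n f q g) = insert q (insert (opp q) (supp f))"
  using assms opp_neq_self[OF assms(2)] two_form_opp_eq_0[OF assms(1-3)] neg_mod_neq_0[OF assms(4)]
  by (auto simp: supp_def extend_def)

lemma two_form_extend:
  assumes f: "two_form n N f" and q: "q \<in> plaquettes N" "f q = 0" and g: "g \<in> {1..<int n}"
  shows "two_form n N (extend n f q g)"
  unfolding two_form_def
proof (intro conjI ballI allI impI)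
  have opp_q: "opp q \<in> plaquettes N" "opp q \<noteq> q"
    using opp_in_plaquettes[OF q(1)] opp_neq_self[OF q(1)] by auto
  fix p assume p: "p \<in> plaquettes N"
  show "extend n f q g p \<in> {0..<int n}"
    using f p g opp_q by (auto simp: two_form_def extend_def)
  have "opp p \<noteq> q" if "p \<noteq> opp q" using that by auto
  moreover have "opp p \<noteq> opp q" if "p \<noteq> q" using that by (metis opp_opp)
  ultimately show "extend n f q g (opp p) = - extend n f q g p mod int n"
    using f p opp_q neg_neg_mod[OF g] by (auto simp: two_form_def extend_def)
next
  fix p assume p: "p \<notin> plaquettes N"
  hence "f p = 0" using f unfolding two_form_def by blast
  thus "extend n f q g p = 0"
    using p q opp_in_plaquettes[OF q(1)] by (auto simp: extend_def)
qed

lemma extend_neq_zero: "g \<in> {1..<int n} \<Longrightarrow> extend n f q g \<noteq> (\<lambda>_. 0)"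
proof
  assume g: "g \<in> {1..<int n}" and "extend n f q g = (\<lambda>_. 0)"
  hence "extend n f q g q = 0" by simp
  thus False using g neg_mod_neq_0[OF g] by (cases "opp q = q") (auto simp: extend_def)
qed

context
  fixes n N and f \<nu> :: "plaq \<Rightarrow> int" and q
  assumes f: "two_form n N f" and \<nu>: "two_form n N \<nu>" and agree: "\<forall>p\<in>supp f. \<nu> p = f p"
    and q: "q \<in> plaquettes N" "f q = 0" "\<nu> q \<noteq> 0"
begin

lemma nonzero_value_range: "\<nu> q \<in> {1..<int n}"
  using \<nu> q unfolding two_form_def by force

lemma value_at_opp: "\<nu> (opp q) = (- \<nu> q) mod int n"
  using \<nu> q unfolding two_form_def by blast

lemma supp_extend_value: "supp (extend n f q (\<nu> q)) = insert q (insert (opp q) (supp f))"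
  by (rule supp_extend[OF f q(1,2) nonzero_value_range])

lemma agrees_with_extend: "\<forall>p\<in>supp (extend n f q (\<nu> q)). \<nu> p = extend n f q (\<nu> q) p"
proof
  fix p assume "p \<in> supp (extend n f q (\<nu> q))"
  then consider "p = q" | "p = opp q" | "p \<in> supp f" "p \<noteq> q" "p \<noteq> opp q"
    unfolding supp_extend_value by blast
  thus "\<nu> p = extend n f q (\<nu> q) p"
    using agree value_at_opp opp_neq_self[OF q(1)] by cases (auto simp: extend_def)
qed

lemma card_supp_extend: "card (supp (extend n f q (\<nu> q))) = card (supp f) + 2"
  using finite_supp[OF f] opp_neq_self[OF q(1)] q(2) two_form_opp_eq_0[OF f q(1,2)]
  unfolding supp_extend_value by (simp add: supp_def)

lemma ext_weight_extend:
  assumes "faithful_rep n \<rho>"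
  shows "ext_weight \<rho> \<beta> f \<nu> = (phi \<rho> \<beta> (\<nu> q))\<^sup>2 * ext_weight \<rho> \<beta> (extend n f q (\<nu> q)) \<nu>"
proof -
  have "q \<in> supp \<nu>" "opp q \<in> supp \<nu>"
    using q(3) value_at_opp neg_mod_neq_0[OF nonzero_value_range] by (simp_all add: supp_def)
  hence split: "supp \<nu> - supp f
      = insert q (insert (opp q) (supp \<nu> - supp (extend n f q (\<nu> q))))"
    using q(2) two_form_opp_eq_0[OF f q(1,2)] unfolding supp_extend_value by (auto simp: supp_def)
  have "ext_weight \<rho> \<beta> f \<nu>
      = phi \<rho> \<beta> (\<nu> q) * (phi \<rho> \<beta> (\<nu> (opp q)) * ext_weight \<rho> \<beta> (extend n f q (\<nu> q)) \<nu>)"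
    unfolding ext_weight_def split using finite_supp[OF \<nu>] opp_neq_self[OF q(1)]
    by (simp add: supp_extend_value)
  also have "phi \<rho> \<beta> (\<nu> (opp q)) = phi \<rho> \<beta> (\<nu> q)"
    unfolding value_at_opp by (rule phi_neg_mod[OF assms])
  finally show ?thesis by (simp add: power2_eq_square)
qed

lemma irreducible_extensions_Suc_extend:
  "\<nu> \<in> irreducible_extensions n N f (Suc k) \<Longrightarrow> \<nu> \<in> irreducible_extensions n N (extend n f q (\<nu> q)) k"
  using agrees_with_extend card_supp_extend by (simp add: irreducible_extensions_def)

end

subsection \<open>Counting extensions\<close>

lemma sum_le_sum_over_cover:
  fixes w :: "'a \<Rightarrow> real" and c :: "'i \<Rightarrow> real" and h :: "'i \<Rightarrow> 'a \<Rightarrow> real"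
  assumes "finite X" "finite I" "\<And>i. i \<in> I \<Longrightarrow> finite (Y i)"
    and cover: "\<And>x. x \<in> X \<Longrightarrow> \<exists>i\<in>I. x \<in> Y i \<and> w x = c i * h i x"
    and c: "\<And>i. i \<in> I \<Longrightarrow> c i \<ge> 0" and h: "\<And>i x. i \<in> I \<Longrightarrow> x \<in> Y i \<Longrightarrow> h i x \<ge> 0"
  shows "sum w X \<le> (\<Sum>i\<in>I. c i * sum (h i) (Y i))"
proof -
  define t where "t = (\<lambda>x i. if x \<in> Y i then c i * h i x else 0)"
  have t: "\<And>x i. i \<in> I \<Longrightarrow> t x i \<ge> 0" using c h by (auto simp: t_def)
  have "sum w X \<le> (\<Sum>x\<in>X. \<Sum>i\<in>I. t x i)"
  proof (rule sum_mono)
    fix x assume "x \<in> X"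
    then obtain i where i: "i \<in> I" "x \<in> Y i" "w x = c i * h i x" using cover by blast
    hence "w x = t x i" by (simp add: t_def)
    also have "\<dots> \<le> (\<Sum>i\<in>I. t x i)" by (rule member_le_sum) (use t i assms(2) in auto)
    finally show "w x \<le> (\<Sum>i\<in>I. t x i)" .
  qed
  also have "\<dots> = (\<Sum>i\<in>I. \<Sum>x\<in>X. t x i)" by (rule sum.swap)
  also have "\<dots> \<le> (\<Sum>i\<in>I. c i * sum (h i) (Y i))"
  proof (rule sum_mono)
    fix i assume i: "i \<in> I"
    have "(\<Sum>x\<in>X. t x i) = (\<Sum>x\<in>X \<inter> Y i. c i * h i x)"
      unfolding t_def by (rule sum.inter_restrict[OF assms(1), symmetric])
    also have "\<dots> \<le> (\<Sum>x\<in>Y i. c i * h i x)"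
      by (rule sum_mono2) (use assms(3) i c h in auto)
    finally show "(\<Sum>x\<in>X. t x i) \<le> c i * sum (h i) (Y i)" by (simp add: sum_distrib_left)
  qed
  finally show ?thesis .
qed


lemma sum_ext_weight_le_branching:
  assumes \<rho>: "faithful_rep n \<rho>" and f: "two_form n N f"
    and Q: "finite Q" "Q \<subseteq> plaquettes N" "\<forall>q\<in>Q. f q = 0"
    and X: "X \<subseteq> irreducible_extensions n N f (Suc k)" and hit: "\<forall>\<nu>\<in>X. \<exists>q\<in>Q. \<nu> q \<noteq> 0"
    and B: "\<And>q g. q \<in> Q \<Longrightarrow> g \<in> {1..<int n} \<Longrightarrow>
      sum (ext_weight \<rho> \<beta> (extend n f q g)) (irreducible_extensions n N (extend n f q g) k) \<le> B"
  shows "sum (ext_weight \<rho> \<beta> f) X \<le> card Q * alpha0 n \<rho> \<beta> * B"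
proof -
  let ?G = "{1..<int n}"
  let ?ext = "\<lambda>i. extend n f (fst i) (snd i)"
  have "sum (ext_weight \<rho> \<beta> f) X \<le> (\<Sum>i\<in>Q \<times> ?G. (phi \<rho> \<beta> (snd i))\<^sup>2
      * sum (ext_weight \<rho> \<beta> (?ext i)) (irreducible_extensions n N (?ext i) k))"
  proof (rule sum_le_sum_over_cover)
    show "finite X"
      using X finite_irreducible_extensions finite_subset by blast
    fix \<nu> assume "\<nu> \<in> X"
    then obtain q where "q \<in> Q" "\<nu> q \<noteq> 0" and \<nu>: "\<nu> \<in> irreducible_extensions n N f (Suc k)"
      using X hit by blast
    moreover have \<nu>2: "two_form n N \<nu>" "\<forall>p\<in>supp f. \<nu> p = f p"
      using \<nu> closed_form_two_form by (auto simp: irreducible_extensions_def)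
    ultimately have q: "q \<in> plaquettes N" "f q = 0" "\<nu> q \<noteq> 0" using Q by auto
    show "\<exists>i\<in>Q \<times> ?G. \<nu> \<in> irreducible_extensions n N (?ext i) k \<and>
        ext_weight \<rho> \<beta> f \<nu> = (phi \<rho> \<beta> (snd i))\<^sup>2 * ext_weight \<rho> \<beta> (?ext i) \<nu>"
      using \<open>q \<in> Q\<close> nonzero_value_range[OF f \<nu>2 q] irreducible_extensions_Suc_extend[OF f \<nu>2 q \<nu>]
        ext_weight_extend[OF f \<nu>2 q \<rho>] by force
  qed (use Q in \<open>auto simp: finite_irreducible_extensions ext_weight_nonneg\<close>)
  also have "\<dots> \<le> (\<Sum>i\<in>Q \<times> ?G. (phi \<rho> \<beta> (snd i))\<^sup>2 * B)"
    using B by (intro sum_mono mult_left_mono) auto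
  also have "\<dots> = (\<Sum>q\<in>Q. \<Sum>g\<in>?G. (phi \<rho> \<beta> g)\<^sup>2 * B)"
    by (simp add: sum.cartesian_product')
  also have "\<dots> = card Q * alpha0 n \<rho> \<beta> * B"
    by (simp add: alpha0_def sum_distrib_right)
  finally show ?thesis .
qed

lemma irreducible_extensions_0: "irreducible_extensions n N f 0 \<subseteq> {f}"
proof
  fix \<nu> assume "\<nu> \<in> irreducible_extensions n N f 0"
  hence \<nu>: "\<nu> \<in> closed_forms n N" "\<forall>p\<in>supp f. \<nu> p = f p" "card (supp \<nu>) = card (supp f)"
    unfolding irreducible_extensions_def by simp_all
  have "supp f \<subseteq> supp \<nu>"
  proof
    fix p assume p: "p \<in> supp f"
    hence "\<nu> p = f p" using \<nu>(2) by blast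
    thus "p \<in> supp \<nu>" using p unfolding supp_def by simp
  qed
  hence supp_eq: "supp f = supp \<nu>"
    using card_subset_eq[OF finite_supp[OF closed_form_two_form[OF \<nu>(1)]]] \<nu>(3) by simp
  have "\<nu> p = f p" for p
  proof (cases "p \<in> supp f")
    case False
    hence "p \<notin> supp \<nu>" using supp_eq by simp
    with False show ?thesis unfolding supp_def by simp
  qed (use \<nu>(2) in blast)
  thus "\<nu> \<in> {f}" by auto
qed

lemma irreducible_extensions_Suc_of_closed:
  assumes "f \<in> closed_forms n N" "f \<noteq> (\<lambda>_. 0)"
  shows "irreducible_extensions n N f (Suc k) = {}"
proof -
  have False if "\<nu> \<in> irreducible_extensions n N f (Suc k)" for \<nu>
  proof -
    have irr: "irreducible_form n N \<nu>" and agree: "\<forall>p\<in>supp f. f p = \<nu> p"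
      and "card (supp \<nu>) = card (supp f) + 2 * Suc k"
      using that by (simp_all add: irreducible_extensions_def)
    hence "f \<noteq> \<nu>" by auto
    with irr assms agree show False unfolding irreducible_form_def by blast
  qed
  thus ?thesis by blast
qed

lemma card_zeros_lt_length:
  fixes f :: "'a \<Rightarrow> 'b::comm_monoid_add"
  assumes "(\<Sum>p\<leftarrow>L. f p) \<noteq> 0"
  shows "card {q \<in> set L. f q = 0} < length L"
proof -
  have "\<exists>q1\<in>set L. f q1 \<noteq> 0" using assms by (induction L) auto
  then obtain q1 where "q1 \<in> set L" "f q1 \<noteq> 0" by blast
  hence "card {q \<in> set L. f q = 0} < card (set L)" by (intro psubset_card_mono) auto
  thus ?thesis using card_length[of L] by linarith
qed

lemma extension_hits_violated_cube:
  assumes "\<nu> \<in> closed_forms n N" "\<forall>p\<in>supp f. \<nu> p = f p" "cube_in_box N x i j l"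
    and viol: "(\<Sum>p\<leftarrow>cube_boundary x i j l. f p) mod int n \<noteq> 0"
  shows "\<exists>q\<in>set (cube_boundary x i j l). f q = 0 \<and> \<nu> q \<noteq> 0"
proof (rule ccontr)
  assume no_hit: "\<not> ?thesis"
  have "\<nu> q = f q" if "q \<in> set (cube_boundary x i j l)" for q
  proof (cases "f q = 0")
    case True
    hence "\<nu> q = 0" using no_hit that by blast
    with True show ?thesis by simp
  next
    case False
    thus ?thesis using assms(2) unfolding supp_def by blast
  qed
  hence "(\<Sum>p\<leftarrow>cube_boundary x i j l. \<nu> p) = (\<Sum>p\<leftarrow>cube_boundary x i j l. f p)"
    by (intro arg_cong[where f = sum_list] map_cong) simp_all
  thus False using closed_form_boundary_sum[OF assms(1,3)] viol by argo
qed

lemma branching_plaquettes_of_not_closed: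
  assumes f: "two_form n N f" "f \<notin> closed_forms n N"
  obtains Q where "finite Q" "Q \<subseteq> plaquettes N" "\<forall>q\<in>Q. f q = 0" "card Q \<le> 5"
    "\<forall>\<nu>\<in>irreducible_extensions n N f k. \<exists>q\<in>Q. \<nu> q \<noteq> 0"
proof -
  obtain x i j l where cube: "cube_in_box N x i j l"
    and viol: "(\<Sum>p\<leftarrow>cube_boundary x i j l. f p) mod int n \<noteq> 0"
    using not_closed_form_violated_cube[OF f] by blast
  define Q where "Q = {q \<in> set (cube_boundary x i j l). f q = 0} \<inter> plaquettes N"
  have "card Q \<le> card {q \<in> set (cube_boundary x i j l). f q = 0}"
    unfolding Q_def by (intro card_mono) auto
  also have "\<dots> < length (cube_boundary x i j l)"
    using viol by (intro card_zeros_lt_length) auto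
  also have "\<dots> = 6" by (simp add: cube_boundary_def)
  finally have card_Q: "card Q \<le> 5" by simp
  have "finite Q" "Q \<subseteq> plaquettes N" "\<forall>q\<in>Q. f q = 0"
    unfolding Q_def by auto
  moreover note card_Q
  moreover have "\<forall>\<nu>\<in>irreducible_extensions n N f k. \<exists>q\<in>Q. \<nu> q \<noteq> 0"
  proof
    fix \<nu> assume "\<nu> \<in> irreducible_extensions n N f k"
    hence \<nu>: "\<nu> \<in> closed_forms n N" "\<forall>p\<in>supp f. \<nu> p = f p" "two_form n N \<nu>"
      using closed_form_two_form by (auto simp: irreducible_extensions_def)
    then obtain q where "q \<in> set (cube_boundary x i j l)" "f q = 0" "\<nu> q \<noteq> 0"
      using extension_hits_violated_cube[OF _ _ cube viol] by blast
    moreover have "q \<in> plaquettes N"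
      using supp_subset_plaquettes[OF \<nu>(3)] \<open>\<nu> q \<noteq> 0\<close> by (auto simp: supp_def)
    ultimately show "\<exists>q\<in>Q. \<nu> q \<noteq> 0" unfolding Q_def by blast
  qed
  ultimately show ?thesis by (rule that)
qed

lemma sum_ext_weight_irreducible_extensions_le:
  assumes \<rho>: "faithful_rep n \<rho>"
  shows "two_form n N f \<Longrightarrow> f \<noteq> (\<lambda>_. 0) \<Longrightarrow>
    sum (ext_weight \<rho> \<beta> f) (irreducible_extensions n N f k) \<le> (5 * alpha0 n \<rho> \<beta>) ^ k"
proof (induction k arbitrary: f)
  case 0
  have "sum (ext_weight \<rho> \<beta> f) (irreducible_extensions n N f 0) \<le> sum (ext_weight \<rho> \<beta> f) {f}"
    by (rule sum_mono2[OF _ irreducible_extensions_0]) (auto simp: ext_weight_nonneg)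
  thus ?case by (simp add: ext_weight_def)
next
  case (Suc k)
  show ?case
  proof (cases "f \<in> closed_forms n N")
    case True
    thus ?thesis using irreducible_extensions_Suc_of_closed Suc.prems(2) alpha0_nonneg by simp
  next
    case False
    then obtain Q where Q: "finite Q" "Q \<subseteq> plaquettes N" "\<forall>q\<in>Q. f q = 0" "card Q \<le> 5"
      and hit: "\<forall>\<nu>\<in>irreducible_extensions n N f (Suc k). \<exists>q\<in>Q. \<nu> q \<noteq> 0"
      using branching_plaquettes_of_not_closed[OF Suc.prems(1)] by blast
    have "sum (ext_weight \<rho> \<beta> f) (irreducible_extensions n N f (Suc k))
        \<le> card Q * alpha0 n \<rho> \<beta> * (5 * alpha0 n \<rho> \<beta>) ^ k"
    proof (rule sum_ext_weight_le_branching[OF \<rho> Suc.prems(1) Q(1-3) subset_refl hit])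
      fix q g assume "q \<in> Q" "g \<in> {1..<int n}"
      thus "sum (ext_weight \<rho> \<beta> (extend n f q g)) (irreducible_extensions n N (extend n f q g) k)
          \<le> (5 * alpha0 n \<rho> \<beta>) ^ k"
        using Q(2,3) by (intro Suc.IH two_form_extend[OF Suc.prems(1)] extend_neq_zero) auto
    qed
    also have "\<dots> \<le> 5 * alpha0 n \<rho> \<beta> * (5 * alpha0 n \<rho> \<beta>) ^ k"
      using Q(4) alpha0_nonneg by (intro mult_right_mono) auto
    finally show ?thesis by (simp only: power_Suc)
  qed
qed

lemma phi_form_eq_ext_weight_zero:
  assumes "faithful_rep n \<rho>" "two_form n N \<nu>"
  shows "phi_form \<rho> N \<beta> \<nu> = ext_weight \<rho> \<beta> (\<lambda>_. 0) \<nu>"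
proof -
  have "phi_form \<rho> N \<beta> \<nu> = (\<Prod>p\<in>supp \<nu>. phi \<rho> \<beta> (\<nu> p))"
    unfolding phi_form_def
    by (rule prod.mono_neutral_right[OF finite_plaquettes supp_subset_plaquettes[OF assms(2)]])
      (auto simp: supp_def phi_0[OF assms(1)])
  thus ?thesis by (simp add: ext_weight_def supp_def)
qed

theorem mainTheorem11:
  fixes n N m :: nat and \<rho> :: "int \<Rightarrow> complex" and \<beta> :: real and p0 :: plaq
  assumes "n \<ge> 1"
    and "faithful_rep n \<rho>"
    and "p0 \<in> plaquettes N"
    and "m \<ge> 1"
    and "\<beta> \<ge> 0"
  shows "(\<Sum>\<nu> \<in> Lambda n N p0 m. phi_form \<rho> N \<beta> \<nu>) \<le> 5 ^ (m - 1) * (alpha0 n \<rho> \<beta>) ^ m"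
proof -
  let ?z = "\<lambda>_. 0 :: int"
  have z: "two_form n N ?z" "supp ?z = {}" using two_form_zero[OF assms(1)] by (auto simp: supp_def)
  have Lambda: "\<nu> \<in> irreducible_extensions n N ?z (Suc (m - 1))" "\<nu> p0 \<noteq> 0"
    if "\<nu> \<in> Lambda n N p0 m" for \<nu>
    using that assms(4) z(2) by (auto simp: Lambda_def irreducible_extensions_def supp_def)
  have "(\<Sum>\<nu> \<in> Lambda n N p0 m. phi_form \<rho> N \<beta> \<nu>) = (\<Sum>\<nu> \<in> Lambda n N p0 m. ext_weight \<rho> \<beta> ?z \<nu>)"
    using phi_form_eq_ext_weight_zero[OF assms(2)] closed_form_two_form
    by (intro sum.cong) (simp_all add: Lambda_def)
  also have "\<dots> \<le> card {p0} * alpha0 n \<rho> \<beta> * (5 * alpha0 n \<rho> \<beta>) ^ (m - 1)"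
  proof (rule sum_ext_weight_le_branching[OF assms(2) z(1)])
    fix q g assume "q \<in> {p0}" "g \<in> {1..<int n}"
    thus "sum (ext_weight \<rho> \<beta> (extend n ?z q g)) (irreducible_extensions n N (extend n ?z q g) (m - 1))
        \<le> (5 * alpha0 n \<rho> \<beta>) ^ (m - 1)"
      using assms(3) by (intro sum_ext_weight_irreducible_extensions_le[OF assms(2)]
          two_form_extend[OF z(1)] extend_neq_zero) auto
  qed (use assms(3) Lambda in blast)+
  also have "\<dots> = 5 ^ (m - 1) * (alpha0 n \<rho> \<beta>) ^ m"
    using assms(4) by (cases m) (simp_all add: power_mult_distrib)
  finally show ?thesis .
qed

end
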